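(* Let $X_1,X_2,\dots$ be i.i.d. Bernoulli random variables with $\Pr\{X_i=1\}=1-\Pr\{X_i=0\}=p\in(0,1)$ and let $\widehat{\boldsymbol p}=\frac1n\sum_{i=1}^nX_i$. Let $0<\varepsilon<\frac34$ and $0<\delta<2\exp\!\Big(-\frac{9\ln2}{(3-4\varepsilon)^2}\Big)$. Define $$\zeta=\frac{4C_{\mathrm{BE}}}{\sqrt{\Big[1-\Big(\frac{4\varepsilon}{3}+\sqrt{\frac{\ln2}{\ln\frac2\delta}}\Big)^2\Big]\frac{\ln\frac1\delta}{2\varepsilon^2}}}.$$ Then $\Pr\{|\widehat{\boldsymbol p}-p|<\varepsilon\mid p\}>1-\delta$ for every $p\in(0,1)$, provided that $$n>\frac1{2\varepsilon^2}\ln\frac{1+\zeta}{\delta}.$$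
   Context: $C_{\mathrm{BE}}$ denotes the absolute constant in the Berry–Esseen inequality: for i.i.d. $Y_1,Y_2,\dots$ distributed as $Y$ with $\mathbb{E}[Y]=0$, $\mathbb{E}[Y^2]>0$, $\mathbb{E}[|Y|^3]<\infty$, the cdf $F_n$ of $\sum_{i=1}^nY_i/\sqrt{n\mathbb{E}[Y^2]}$ satisfies $|F_n(y)-\Phi(y)|\le\frac{C_{\mathrm{BE}}}{\sqrt n}\frac{\mathbb{E}[|Y|^3]}{\mathbb{E}^{3/2}[Y^2]}$ for all $y,n$, where $\Phi$ is the standard normal cdf. $\Pr\{\cdot\mid p\}$ denotes probability when the Bernoulli parameter is $p$. *)

theory Defs
  imports "HOL-Probability.Probability"
begin

definition std_normal_cdf :: "real \<Rightarrow> real" where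
  "std_normal_cdf x = measure (density lborel std_normal_density) {..x}"

definition berry_esseen_const :: "real \<Rightarrow> bool" where
  "berry_esseen_const C \<longleftrightarrow>
    (\<forall>M :: real measure.
       prob_space M \<and> sets M = sets borel \<and> integrable M (\<lambda>y. \<bar>y\<bar> ^ 3) \<and>
       (\<integral>y. y \<partial>M) = 0 \<and> (\<integral>y. y\<^sup>2 \<partial>M) > 0 \<longrightarrow>
       (\<forall>n::nat. n > 0 \<longrightarrow> (\<forall>x::real.
          \<bar>measure (PiM {..<n} (\<lambda>_. M))
              {\<omega> \<in> space (PiM {..<n} (\<lambda>_. M)).
                 (\<Sum>i<n. \<omega> i) / sqrt (real n * (\<integral>y. y\<^sup>2 \<partial>M)) \<le> x}
           - std_normal_cdf x\<bar>
          \<le> C / sqrt (real n) * ((\<integral>y. \<bar>y\<bar> ^ 3 \<partial>M) / (\<integral>y. y\<^sup>2 \<partial>M) powr (3/2)))))"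

end

theory Submission
  imports Defs
begin

text \<open>The lower tail of \<open>Bin(n, p)\<close> is the upper tail of \<open>Bin(n, 1 - p)\<close>, so it suffices to
  bound \<open>P\<^sub>p(S \<ge> n r)\<close> for \<open>r = p + \<epsilon>\<close> by \<open>exp (-2n\<epsilon>\<^sup>2) (1 + \<zeta>)/2\<close>. Tilting from \<open>p\<close> to \<open>r\<close>
  gives \<open>P\<^sub>p(S \<ge> n r) \<le> exp (-n KL(r, p)) P\<^sub>r(S \<ge> n r)\<close>, and convexity of \<open>4/(1 - y\<^sup>2)\<close> gives
  \<open>KL(r, p) \<ge> 2\<epsilon>\<^sup>2/(1 - y\<^sub>0\<^sup>2)\<close> with \<open>y\<^sub>0 = 2r - 1 - 4\<epsilon>/3\<close>. If \<open>|2r - 1| > 4\<epsilon>/3 + \<phi>\<close>,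
  where \<open>\<phi>\<^sup>2 = ln 2 / ln (2/\<delta>)\<close>, this beats Hoeffding's exponent \<open>2\<epsilon>\<^sup>2\<close> by enough to gain a
  factor \<open>1/2\<close>. Otherwise \<open>r\<close> is close to \<open>1/2\<close>, so \<open>r(1 - r)\<close> is bounded below, and the
  Berry-Esseen inequality at the mean of \<open>Bin(n, r)\<close> bounds \<open>P\<^sub>r(S \<ge> n r)\<close> by \<open>(1 + \<zeta>)/2\<close>.\<close>

section \<open>Berry-Esseen at the mean of a binomial distribution\<close>

text \<open>The sign is chosen so that a nonpositive sum of \<open>n\<close> copies means at least \<open>n r\<close> successes.\<close>

definition centered_bernoulli :: "real \<Rightarrow> real measure" where
  "centered_bernoulli r = distr (measure_pmf (bernoulli_pmf r)) borel (\<lambda>b. if b then r - 1 else r)"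

lemma prob_space_centered_bernoulli: "prob_space (centered_bernoulli r)"
  unfolding centered_bernoulli_def by (rule measure_pmf.prob_space_distr) simp

lemma sets_centered_bernoulli [simp]: "sets (centered_bernoulli r) = sets borel"
  by (simp add: centered_bernoulli_def)

lemma integrable_centered_bernoulli:
  fixes f :: "real \<Rightarrow> real"
  assumes [measurable]: "f \<in> borel_measurable borel"
  shows "integrable (centered_bernoulli r) f"
  unfolding centered_bernoulli_def
  by (subst integrable_distr_eq) (auto intro!: integrable_measure_pmf_finite)

lemma integral_centered_bernoulli:
  fixes f :: "real \<Rightarrow> real"
  assumes "0 \<le> r" "r \<le> 1" and [measurable]: "f \<in> borel_measurable borel"
  shows "(\<integral>y. f y \<partial>centered_bernoulli r) = r * f (r - 1) + (1 - r) * f r"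
  unfolding centered_bernoulli_def using assms by (subst integral_distr) auto

lemma prob_PiM_centered_bernoulli_sum_nonpos:
  assumes r: "0 < r" "r < 1" and n: "n > 0"
  shows "measure (PiM {..<n} (\<lambda>_. centered_bernoulli r))
           {\<omega> \<in> space (PiM {..<n} (\<lambda>_. centered_bernoulli r)). (\<Sum>i<n. \<omega> i) \<le> 0}
       = measure_pmf.prob (binomial_pmf n r) {k. real k \<ge> real n * r}"
proof -
  define coins where "coins = Pi_pmf {..<n} False (\<lambda>_. bernoulli_pmf r)"
  define X where "X = (\<lambda>i (f :: nat \<Rightarrow> bool). if f i then r - 1 else r)"
  have indep: "prob_space.indep_vars (measure_pmf coins) (\<lambda>_. borel) X {..<n}"
    unfolding coins_def X_def
    by (intro prob_space.indep_vars_compose2[OF _ indep_vars_Pi_pmf])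
       (auto simp: measure_pmf.prob_space_axioms)
  have marginal: "distr (measure_pmf coins) borel (X i) = centered_bernoulli r" if "i < n" for i
  proof -
    have "distr (measure_pmf coins) borel (X i) =
        distr (measure_pmf (map_pmf (\<lambda>f. f i) coins)) borel (\<lambda>b. if b then r - 1 else r)"
      unfolding map_pmf_rep_eq X_def by (subst distr_distr) (auto simp: o_def)
    also have "map_pmf (\<lambda>f. f i) coins = bernoulli_pmf r"
      unfolding coins_def using that by (subst Pi_pmf_component) auto
    finally show ?thesis unfolding centered_bernoulli_def .
  qed
  have joint: "distr (measure_pmf coins) (PiM {..<n} (\<lambda>_. borel)) (\<lambda>x. \<lambda>i\<in>{..<n}. X i x)
      = PiM {..<n} (\<lambda>_. centered_bernoulli r)"
  proof -
    have "distr (measure_pmf coins) (PiM {..<n} (\<lambda>_. borel)) (\<lambda>x. \<lambda>i\<in>{..<n}. X i x)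
        = PiM {..<n} (\<lambda>i. distr (measure_pmf coins) borel (X i))"
      using indep n
      by (subst (asm) prob_space.indep_vars_iff_distr_eq_PiM[OF measure_pmf.prob_space_axioms])
         (auto simp: X_def)
    also have "\<dots> = PiM {..<n} (\<lambda>_. centered_bernoulli r)"
      by (rule PiM_cong) (auto simp: marginal)
    finally show ?thesis .
  qed
  have space: "space (PiM {..<n} (\<lambda>_. centered_bernoulli r)) = space (PiM {..<n} (\<lambda>_. borel))"
    by (simp add: space_PiM centered_bernoulli_def)
  have sum_X: "(\<Sum>i<n. X i f) = real n * r - (\<Sum>i<n. if f i then 1 else 0)" for f
  proof -
    have "(\<Sum>i<n. X i f) = (\<Sum>i<n. r - (if f i then 1 else 0))"
      by (rule sum.cong) (auto simp: X_def)
    then show ?thesis by (simp add: sum_subtractf)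
  qed
  have event: "{\<omega> \<in> space (PiM {..<n} (\<lambda>_. borel)). (\<Sum>i<n. \<omega> i) \<le> (0::real)}
      \<in> sets (PiM {..<n} (\<lambda>_. borel))"
    by measurable
  have "measure (PiM {..<n} (\<lambda>_. centered_bernoulli r))
          {\<omega> \<in> space (PiM {..<n} (\<lambda>_. centered_bernoulli r)). (\<Sum>i<n. \<omega> i) \<le> 0}
      = measure (measure_pmf coins) {f. (\<Sum>i<n. X i f) \<le> 0}"
    unfolding joint[symmetric] space using event
    by (subst measure_distr) (auto simp: X_def space_PiM PiE_def intro!: arg_cong2[where f=measure])
  also have "\<dots> = measure_pmf.prob coins {f. real n * r \<le> (\<Sum>i<n. if f i then 1 else 0)}"
    by (simp add: sum_X)
  also have "\<dots> = measure_pmf.prob (binomial_pmf n r) {k. real k \<ge> real n * r}"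
    unfolding coins_def
    using binomial_distribution.prob_binomial_pmf_conv_coins[of r n "\<lambda>t. real n * r \<le> t"] r n
    by (auto simp: binomial_distribution_def)
  finally show ?thesis .
qed

lemma std_normal_cdf_0: "std_normal_cdf 0 = 1/2"
proof -
  define N where "N = density lborel std_normal_density"
  interpret N: prob_space N unfolding N_def by (rule prob_space_normal_density) simp
  have sets_N: "sets N = sets borel" by (simp add: N_def)
  have emeasure_N: "emeasure N A = (\<integral>\<^sup>+x. ennreal (std_normal_density x) * indicator A x \<partial>lborel)"
    if "A \<in> sets borel" for A
    unfolding N_def using that by (subst emeasure_density) auto
  have "emeasure N {..0} = (\<integral>\<^sup>+x. ennreal (std_normal_density x) * indicator {..0} x \<partial>distr lborel borel uminus)"
    by (simp add: emeasure_N lborel_distr_uminus)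
  also have "\<dots> = (\<integral>\<^sup>+x. ennreal (std_normal_density (-x)) * indicator {..0} (-x) \<partial>lborel)"
    by (subst nn_integral_distr) auto
  also have "\<dots> = emeasure N {0..}"
    by (auto simp: emeasure_N std_normal_density_def indicator_def intro!: nn_integral_cong)
  finally have symmetric: "measure N {..0} = measure N {0..}" by (simp add: measure_def)
  have "emeasure N {0} = ennreal (std_normal_density 0) * emeasure lborel {0}"
    by (simp add: emeasure_N mult.commute)
  then have "measure N {0} = 0" by (simp add: measure_def)
  moreover have "measure N {0..} = measure N {0} + measure N {0<..}"
    by (subst N.finite_measure_Union[symmetric]) (auto simp: sets_N intro!: arg_cong2[where f=measure])
  moreover have "measure N {..0} = 1 - measure N {0<..}"
    using N.prob_compl[of "{0<..}"] by (simp add: sets_N N_def Compl_eq_Diff_UNIV[symmetric] not_less)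
  ultimately show ?thesis unfolding std_normal_cdf_def N_def[symmetric] using symmetric by simp
qed

lemma berry_esseen_binomial_mean:
  assumes BE: "berry_esseen_const C" and r: "0 < r" "r < 1" and n: "n > 0"
  shows "\<bar>measure_pmf.prob (binomial_pmf n r) {k. real k \<ge> real n * r} - 1/2\<bar>
     \<le> C / sqrt (real n) * ((r\<^sup>2 + (1 - r)\<^sup>2) / sqrt (r * (1 - r)))"
proof -
  let ?M = "centered_bernoulli r" and ?v = "r * (1 - r)"
  have v: "?v > 0" using r by simp
  have moments: "(\<integral>y. y \<partial>?M) = 0" "(\<integral>y. y\<^sup>2 \<partial>?M) = ?v"
      "(\<integral>y. \<bar>y\<bar> ^ 3 \<partial>?M) = ?v * (r\<^sup>2 + (1 - r)\<^sup>2)"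
    using r by (simp_all add: integral_centered_bernoulli algebra_simps power2_eq_square
        power3_eq_cube abs_if)
  have "?v powr (3/2) = ?v * sqrt ?v"
    using v by (simp add: powr_add[of ?v 1 "1/2", simplified] powr_half_sqrt)
  then have ratio: "(\<integral>y. \<bar>y\<bar> ^ 3 \<partial>?M) / (\<integral>y. y\<^sup>2 \<partial>?M) powr (3/2)
      = (r\<^sup>2 + (1 - r)\<^sup>2) / sqrt ?v"
    using v by (simp add: moments)
  have event: "{\<omega> \<in> space (PiM {..<n} (\<lambda>_. ?M)). (\<Sum>i<n. \<omega> i) / sqrt (real n * ?v) \<le> 0}
      = {\<omega> \<in> space (PiM {..<n} (\<lambda>_. ?M)). (\<Sum>i<n. \<omega> i) \<le> 0}"
  proof -
    have "sqrt (real n * ?v) > 0" using v n by simp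
    then show ?thesis by (auto simp: divide_le_0_iff)
  qed
  from BE[unfolded berry_esseen_const_def, rule_format, of ?M n 0] n v
  have "\<bar>measure (PiM {..<n} (\<lambda>_. ?M))
          {\<omega> \<in> space (PiM {..<n} (\<lambda>_. ?M)). (\<Sum>i<n. \<omega> i) / sqrt (real n * (\<integral>y. y\<^sup>2 \<partial>?M)) \<le> 0}
        - std_normal_cdf 0\<bar>
      \<le> C / sqrt (real n) * ((\<integral>y. \<bar>y\<bar> ^ 3 \<partial>?M) / (\<integral>y. y\<^sup>2 \<partial>?M) powr (3/2))"
    by (simp add: prob_space_centered_bernoulli integrable_centered_bernoulli moments)
  then show ?thesis
    unfolding ratio by (simp add: moments(2) event prob_PiM_centered_bernoulli_sum_nonpos[OF r n]
        std_normal_cdf_0)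
qed

lemma berry_esseen_const_nonneg:
  assumes "berry_esseen_const C"
  shows "C \<ge> 0"
proof -
  let ?P = "measure_pmf.prob (binomial_pmf 1 (1/2)) {k. real k \<ge> real 1 * (1/2)}"
  have "\<bar>?P - 1/2\<bar> \<le> C / sqrt (real 1) * (((1/2)\<^sup>2 + (1 - 1/2)\<^sup>2) / sqrt (1/2 * (1 - 1/2)))"
    by (rule berry_esseen_binomial_mean[OF assms]) simp_all
  then have "0 \<le> C * (((1/2)\<^sup>2 + (1 - 1/2)\<^sup>2) / sqrt (1/2 * (1 - 1/2)))"
    using abs_ge_zero order_trans by simp
  then show ?thesis by (simp add: zero_le_divide_iff zero_le_mult_iff)
qed

lemma binomial_prob_ge_mean_le:
  assumes BE: "berry_esseen_const C" and r: "0 < r" "r < 1" and n: "n > 0"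
  shows "measure_pmf.prob (binomial_pmf n r) {k. real k \<ge> real n * r}
     \<le> 1/2 + C / sqrt (real n * (r * (1 - r)))"
proof -
  have "r\<^sup>2 + (1 - r)\<^sup>2 \<le> 1" using r by (simp add: power2_eq_square algebra_simps)
  then have "C / sqrt (real n) * ((r\<^sup>2 + (1 - r)\<^sup>2) / sqrt (r * (1 - r)))
      \<le> C / sqrt (real n) * (1 / sqrt (r * (1 - r)))"
    using berry_esseen_const_nonneg[OF BE] r by (intro mult_left_mono divide_right_mono) auto
  also have "\<dots> = C / sqrt (real n * (r * (1 - r)))" by (simp add: real_sqrt_mult)
  finally show ?thesis using berry_esseen_binomial_mean[OF BE r n] by linarith
qed

section \<open>Exponential tilting of the binomial distribution\<close>

definition bernoulli_KL :: "real \<Rightarrow> real \<Rightarrow> real" where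
  "bernoulli_KL r p = r * (ln r - ln p) + (1 - r) * (ln (1 - r) - ln (1 - p))"

lemma prob_binomial_pmf_eq_sum:
  assumes "0 < p" "p < 1"
  shows "measure_pmf.prob (binomial_pmf n p) A
       = (\<Sum>k\<in>A \<inter> {..n}. real (n choose k) * p ^ k * (1 - p) ^ (n - k))"
proof -
  have "measure_pmf.prob (binomial_pmf n p) A
      = measure_pmf.prob (binomial_pmf n p) (A \<inter> set_pmf (binomial_pmf n p))"
    by (simp add: measure_Int_set_pmf)
  also have "\<dots> = (\<Sum>k\<in>A \<inter> {..n}. pmf (binomial_pmf n p) k)"
    using assms by (subst measure_measure_pmf_finite) auto
  finally show ?thesis using assms by simp
qed

lemma prob_binomial_le_eq_ge:
  assumes "0 < p" "p < 1"
  shows "measure_pmf.prob (binomial_pmf n p) {k. real k \<le> t}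
       = measure_pmf.prob (binomial_pmf n (1 - p)) {k. real k \<ge> real n - t}"
proof -
  have "(\<Sum>k\<in>{k. real k \<le> t} \<inter> {..n}. real (n choose k) * p ^ k * (1 - p) ^ (n - k))
      = (\<Sum>k\<in>{k. real k \<ge> real n - t} \<inter> {..n}. real (n choose k) * (1 - p) ^ k * (1 - (1 - p)) ^ (n - k))"
    by (rule sum.reindex_bij_witness[where i="\<lambda>k. n - k" and j="\<lambda>k. n - k"])
       (auto simp: of_nat_diff binomial_symmetric[symmetric] algebra_simps)
  then show ?thesis using assms by (simp add: prob_binomial_pmf_eq_sum)
qed

lemma prob_binomial_ge_le_tilted:
  assumes p: "0 < p" and pr: "p < r" and r: "r < 1"
  shows "measure_pmf.prob (binomial_pmf n p) {k. real k \<ge> real n * r}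
      \<le> exp (- real n * bernoulli_KL r p) * measure_pmf.prob (binomial_pmf n r) {k. real k \<ge> real n * r}"
proof -
  let ?E = "exp (- real n * bernoulli_KL r p)"
  have term_le: "real (n choose k) * p ^ k * (1 - p) ^ (n - k)
      \<le> ?E * (real (n choose k) * r ^ k * (1 - r) ^ (n - k))"
    if k: "k \<le> n" "real k \<ge> real n * r" for k
  proof -
    have "ln p - ln r < 0" "ln (1 - p) - ln (1 - r) > 0" using assms by simp_all
    then have "(real k - real n * r) * ((ln p - ln r) - (ln (1 - p) - ln (1 - r))) \<le> 0"
      using k by (intro mult_nonneg_nonpos) auto
    then have "real k * ln p + real (n - k) * ln (1 - p)
        \<le> - real n * bernoulli_KL r p + (real k * ln r + real (n - k) * ln (1 - r))"
      using k by (simp add: bernoulli_KL_def of_nat_diff algebra_simps)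
    then have "exp (real k * ln p + real (n - k) * ln (1 - p))
        \<le> ?E * exp (real k * ln r + real (n - k) * ln (1 - r))"
      by (simp flip: exp_add)
    moreover have "exp (real k * ln q + real (n - k) * ln (1 - q)) = q ^ k * (1 - q) ^ (n - k)"
      if "0 < q" "q < 1" for q
      using that by (simp add: exp_add exp_of_nat_mult)
    ultimately have "p ^ k * (1 - p) ^ (n - k) \<le> ?E * (r ^ k * (1 - r) ^ (n - k))"
      using assms by simp
    then have "real (n choose k) * (p ^ k * (1 - p) ^ (n - k))
        \<le> real (n choose k) * (?E * (r ^ k * (1 - r) ^ (n - k)))"
      by (rule mult_left_mono) simp
    then show ?thesis by (simp only: ac_simps)
  qed
  have "measure_pmf.prob (binomial_pmf n p) {k. real k \<ge> real n * r}
      \<le> (\<Sum>k\<in>{k. real k \<ge> real n * r} \<inter> {..n}. ?E * (real (n choose k) * r ^ k * (1 - r) ^ (n - k)))"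
    unfolding prob_binomial_pmf_eq_sum[OF p order.strict_trans[OF pr r]]
    by (intro sum_mono term_le) auto
  also have "\<dots> = ?E * measure_pmf.prob (binomial_pmf n r) {k. real k \<ge> real n * r}"
    using assms by (simp add: prob_binomial_pmf_eq_sum sum_distrib_left)
  finally show ?thesis .
qed

section \<open>Lower bounds for the Bernoulli divergence\<close>

lemma four_div_one_minus_square_ge_tangent:
  fixes y y0 :: real
  assumes y: "\<bar>y\<bar> < 1" and y0: "\<bar>y0\<bar> < 1"
  shows "4 / (1 - y0\<^sup>2) + 8 * y0 * (y - y0) / (1 - y0\<^sup>2)\<^sup>2 \<le> 4 / (1 - y\<^sup>2)"
proof -
  have A: "1 - y\<^sup>2 > 0" and B: "1 - y0\<^sup>2 > 0"
    using y y0 by (simp_all add: abs_square_less_1)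
  have "4 / (1 - y\<^sup>2) - (4 / (1 - y0\<^sup>2) + 8 * y0 * (y - y0) / (1 - y0\<^sup>2)\<^sup>2)
      = 4 * (y - y0)\<^sup>2 * ((y + y0)\<^sup>2 + (1 - y\<^sup>2)) / ((1 - y\<^sup>2) * (1 - y0\<^sup>2)\<^sup>2)"
  proof -
    have "4 / a - (4 / b + 8 * y0 * (y - y0) / b\<^sup>2) = (4 * b\<^sup>2 - 4 * a * b - 8 * y0 * (y - y0) * a) / (a * b\<^sup>2)"
      if "a > 0" "b > 0" for a b :: real
      using that by (simp add: field_simps power2_eq_square)
    moreover have "4 * (1 - y0\<^sup>2)\<^sup>2 - 4 * (1 - y\<^sup>2) * (1 - y0\<^sup>2) - 8 * y0 * (y - y0) * (1 - y\<^sup>2)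
        = 4 * (y - y0)\<^sup>2 * ((y + y0)\<^sup>2 + (1 - y\<^sup>2))"
      by (simp add: power2_eq_square algebra_simps)
    ultimately show ?thesis using A B by simp
  qed
  moreover have "\<dots> \<ge> 0"
    using A B by (intro divide_nonneg_pos mult_nonneg_nonneg) auto
  ultimately show ?thesis by linarith
qed

text \<open>With \<open>x = 2r - 1\<close>, the derivative of \<open>s \<mapsto> KL(r, r - s)\<close> is \<open>s \<cdot> 4/(1 - (x - 2s)\<^sup>2)\<close>.
  Replacing \<open>4/(1 - y\<^sup>2)\<close> by its tangent at \<open>y\<^sub>0\<close> and integrating over \<open>[0, e]\<close> gives a
  cubic in \<open>e\<close> whose higher terms cancel exactly for \<open>y\<^sub>0 = x - 4e/3\<close>.\<close>

lemma bernoulli_KL_lower: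
  fixes r e :: real
  assumes e: "0 < e" "e < r" and r: "r < 1"
  shows "2 * e\<^sup>2 / (1 - (2 * r - 1 - 4 * e / 3)\<^sup>2) \<le> bernoulli_KL r (r - e)"
proof -
  define x where "x = 2 * r - 1"
  define y0 where "y0 = x - 4 * e / 3"
  define \<alpha> where "\<alpha> = 4 / (1 - y0\<^sup>2)"
  define \<beta> where "\<beta> = 8 * y0 / (1 - y0\<^sup>2)\<^sup>2"
  define F where "F = (\<lambda>s. bernoulli_KL r (r - s) - (\<alpha> * s\<^sup>2 / 2 + \<beta> * (x - y0) * s\<^sup>2 / 2 - 2 * \<beta> * s ^ 3 / 3))"
  have y0: "\<bar>y0\<bar> < 1" using assms unfolding y0_def x_def by auto
  have "F 0 \<le> F e"
  proof (rule DERIV_nonneg_imp_nondecreasing[of 0 e F])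
    fix s assume s: "0 \<le> s" "s \<le> e"
    have rs: "0 < r - s" "0 < 1 - r + s" using s e r by auto
    have D: "(F has_real_derivative
        (r * (1 / (r - s)) - (1 - r) * (1 / (1 - r + s)) - (\<alpha> * s + \<beta> * (x - y0) * s - 2 * \<beta> * s\<^sup>2))) (at s)"
      unfolding F_def bernoulli_KL_def using rs
      by (auto intro!: derivative_eq_intros simp: power2_eq_square)
    have "r * (1 / (r - s)) - (1 - r) * (1 / (1 - r + s)) = s * (4 / (1 - (x - 2 * s)\<^sup>2))"
    proof -
      have "1 - (x - 2 * s)\<^sup>2 = 4 * ((r - s) * (1 - r + s))"
        unfolding x_def by (simp add: power2_eq_square algebra_simps)
      moreover have "r * (1 / (r - s)) - (1 - r) * (1 / (1 - r + s)) = s / ((r - s) * (1 - r + s))"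
        using rs by (simp add: field_simps)
      ultimately show ?thesis using rs by simp
    qed
    moreover have "\<alpha> + \<beta> * ((x - 2 * s) - y0) \<le> 4 / (1 - (x - 2 * s)\<^sup>2)"
      unfolding \<alpha>_def \<beta>_def
      using four_div_one_minus_square_ge_tangent[of "x - 2 * s" y0] y0 rs unfolding x_def
      by (simp add: algebra_simps)
    ultimately have "r * (1 / (r - s)) - (1 - r) * (1 / (1 - r + s)) - (\<alpha> * s + \<beta> * (x - y0) * s - 2 * \<beta> * s\<^sup>2)
        = s * (4 / (1 - (x - 2 * s)\<^sup>2) - (\<alpha> + \<beta> * ((x - 2 * s) - y0)))"
      "4 / (1 - (x - 2 * s)\<^sup>2) - (\<alpha> + \<beta> * ((x - 2 * s) - y0)) \<ge> 0"
      by (auto simp: algebra_simps power2_eq_square)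
    with D s show "\<exists>y. (F has_real_derivative y) (at s) \<and> 0 \<le> y" by auto
  qed (use e in simp)
  moreover have "F 0 = 0" unfolding F_def bernoulli_KL_def by simp
  moreover have "F e = bernoulli_KL r (r - e) - \<alpha> * e\<^sup>2 / 2"
    unfolding F_def y0_def by (simp add: algebra_simps power2_eq_square power3_eq_cube)
  moreover have "\<alpha> * e\<^sup>2 / 2 = 2 * e\<^sup>2 / (1 - y0\<^sup>2)"
    unfolding \<alpha>_def by (simp add: divide_simps)
  ultimately show ?thesis unfolding y0_def x_def by simp
qed

lemma ln_one_minus_le_cubic:
  fixes e :: real
  assumes "0 \<le> e" "e < 1"
  shows "ln (1 - e) \<le> - (e + e\<^sup>2 / 2 + e ^ 3 / 3)"
proof -
  define G where "G = (\<lambda>t::real. - t - t\<^sup>2 / 2 - t ^ 3 / 3 - ln (1 - t))"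
  have "G 0 \<le> G e"
  proof (rule DERIV_nonneg_imp_nondecreasing[of 0 e G])
    fix t assume t: "0 \<le> t" "t \<le> e"
    then have t1: "1 - t > 0" using assms by simp
    have "(G has_real_derivative (- 1 - t - t\<^sup>2 + 1 / (1 - t))) (at t)"
      unfolding G_def using t1
      by (auto intro!: derivative_eq_intros simp: power2_eq_square field_simps)
    moreover have "- 1 - t - t\<^sup>2 + 1 / (1 - t) = t ^ 3 / (1 - t)"
      using t1 by (simp add: field_simps power2_eq_square power3_eq_cube)
    ultimately show "\<exists>y. (G has_real_derivative y) (at t) \<and> 0 \<le> y"
      using t t1 by auto
  qed (use assms in simp)
  then show ?thesis unfolding G_def by simp
qed

text \<open>The endpoint \<open>r = 1\<close> of \<open>bernoulli_KL_lower\<close>, where \<open>KL(1, 1 - e) = - ln (1 - e)\<close>.\<close>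

lemma neg_ln_one_minus_ge:
  fixes e :: real
  assumes e: "0 < e" "e < 3/4"
  shows "2 * e\<^sup>2 / (1 - (1 - 4 * e / 3)\<^sup>2) \<le> - ln (1 - e)"
proof -
  have "2 * e\<^sup>2 / (1 - (1 - 4 * e / 3)\<^sup>2) = 9 * e / (12 - 8 * e)"
    using e by (simp add: field_simps power2_eq_square)
  also have "\<dots> \<le> e + e\<^sup>2 / 2 + e ^ 3 / 3"
  proof -
    have "e ^ 3 \<le> (3/4) ^ 3" using e by (intro power_mono) auto
    then have "9 \<le> 12 - 2 * e - 8 / 3 * e ^ 3" using e by (simp add: power3_eq_cube)
    then have "9 * e \<le> e * (12 - 2 * e - 8 / 3 * e ^ 3)" using e by simp
    also have "\<dots> = (e + e\<^sup>2 / 2 + e ^ 3 / 3) * (12 - 8 * e)"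
      by (simp add: algebra_simps power2_eq_square power3_eq_cube)
    finally show ?thesis using e by (simp add: divide_le_eq)
  qed
  finally show ?thesis using ln_one_minus_le_cubic[of e] e by simp
qed

section \<open>Tail bounds\<close>

text \<open>The last hypothesis fixes \<open>m\<close> as the sample size at which the excess
  \<open>2\<epsilon>\<^sup>2/(1 - \<phi>\<^sup>2) - 2\<epsilon>\<^sup>2\<close> of the exponent, accumulated over \<open>m\<close> trials, equals \<open>ln 2\<close>.\<close>

lemma exp_neg_mult_le_half_exp:
  fixes n m \<epsilon> \<phi> w K :: real
  assumes w: "0 < 1 - w\<^sup>2" "\<phi>\<^sup>2 \<le> w\<^sup>2" and K: "2 * \<epsilon>\<^sup>2 / (1 - w\<^sup>2) \<le> K"
    and m: "0 \<le> m" "m \<le> n"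
    and balance: "2 * \<epsilon>\<^sup>2 * m * \<phi>\<^sup>2 = ln 2 * (1 - \<phi>\<^sup>2)"
  shows "exp (- n * K) \<le> exp (- 2 * n * \<epsilon>\<^sup>2) / 2"
proof -
  have phi: "0 < 1 - \<phi>\<^sup>2" using w by linarith
  have "2 * \<epsilon>\<^sup>2 / (1 - \<phi>\<^sup>2) \<le> 2 * \<epsilon>\<^sup>2 / (1 - w\<^sup>2)"
    using w phi by (intro divide_left_mono) auto
  with K m have "n * (2 * \<epsilon>\<^sup>2 / (1 - \<phi>\<^sup>2)) \<le> n * K" by (intro mult_left_mono) auto
  moreover have "n * (2 * \<epsilon>\<^sup>2 / (1 - \<phi>\<^sup>2)) = 2 * n * \<epsilon>\<^sup>2 + n * (2 * \<epsilon>\<^sup>2 * \<phi>\<^sup>2 / (1 - \<phi>\<^sup>2))"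
    using phi by (simp add: field_simps)
  moreover have "m * (2 * \<epsilon>\<^sup>2 * \<phi>\<^sup>2 / (1 - \<phi>\<^sup>2)) \<le> n * (2 * \<epsilon>\<^sup>2 * \<phi>\<^sup>2 / (1 - \<phi>\<^sup>2))"
    using m phi by (intro mult_right_mono) auto
  moreover have "m * (2 * \<epsilon>\<^sup>2 * \<phi>\<^sup>2 / (1 - \<phi>\<^sup>2)) = ln 2"
    using balance phi by (simp add: field_simps)
  ultimately have "2 * n * \<epsilon>\<^sup>2 + ln 2 \<le> n * K" by linarith
  then have "exp (- n * K) \<le> exp (- 2 * n * \<epsilon>\<^sup>2 - ln 2)" by simp
  also have "\<dots> = exp (- 2 * n * \<epsilon>\<^sup>2) / 2" by (simp add: exp_diff)
  finally show ?thesis .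
qed

lemma binomial_upper_tail_at_one:
  fixes p \<epsilon> \<phi> m :: real
  assumes pe: "p + \<epsilon> = 1" and eps: "0 < \<epsilon>" and phi: "0 \<le> \<phi>" "4 * \<epsilon> / 3 + \<phi> < 1"
    and m: "0 \<le> m" "m \<le> real n"
    and balance: "2 * \<epsilon>\<^sup>2 * m * \<phi>\<^sup>2 = ln 2 * (1 - \<phi>\<^sup>2)"
  shows "measure_pmf.prob (binomial_pmf n p) {k. real k \<ge> real n * (p + \<epsilon>)}
     \<le> exp (- 2 * real n * \<epsilon>\<^sup>2) / 2"
proof -
  have "{k. real k \<ge> real n * (p + \<epsilon>)} \<inter> {..n} = {n}" using pe by auto
  then have "measure_pmf.prob (binomial_pmf n p) {k. real k \<ge> real n * (p + \<epsilon>)} = p ^ n"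
    using pe eps phi by (simp add: prob_binomial_pmf_eq_sum)
  also have "\<dots> = exp (- real n * (- ln (1 - \<epsilon>)))"
    using pe eps phi by (simp add: exp_of_nat_mult flip: pe)
  also have "\<dots> \<le> exp (- 2 * real n * \<epsilon>\<^sup>2) / 2"
  proof (rule exp_neg_mult_le_half_exp[of "1 - 4 * \<epsilon> / 3" \<phi>])
    show "0 < 1 - (1 - 4 * \<epsilon> / 3)\<^sup>2" using eps phi by (simp add: abs_square_less_1)
    show "\<phi>\<^sup>2 \<le> (1 - 4 * \<epsilon> / 3)\<^sup>2" using phi by (intro power_mono) auto
    show "2 * \<epsilon>\<^sup>2 / (1 - (1 - 4 * \<epsilon> / 3)\<^sup>2) \<le> - ln (1 - \<epsilon>)"
      using eps phi by (intro neg_ln_one_minus_ge) auto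
  qed (use m balance in auto)
  finally show ?thesis .
qed

lemma binomial_upper_tail_off_centre:
  fixes p \<epsilon> \<phi> m :: real
  assumes p: "0 < p" and eps: "0 < \<epsilon>" "p + \<epsilon> < 1" and phi: "0 \<le> \<phi>"
    and off: "4 * \<epsilon> / 3 + \<phi> < \<bar>2 * (p + \<epsilon>) - 1\<bar>"
    and m: "0 \<le> m" "m \<le> real n"
    and balance: "2 * \<epsilon>\<^sup>2 * m * \<phi>\<^sup>2 = ln 2 * (1 - \<phi>\<^sup>2)"
  shows "measure_pmf.prob (binomial_pmf n p) {k. real k \<ge> real n * (p + \<epsilon>)}
     \<le> exp (- 2 * real n * \<epsilon>\<^sup>2) / 2"
proof -
  define r where "r = p + \<epsilon>"
  define y0 where "y0 = 2 * r - 1 - 4 * \<epsilon> / 3"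
  have "measure_pmf.prob (binomial_pmf n p) {k. real k \<ge> real n * r}
      \<le> exp (- real n * bernoulli_KL r p) * measure_pmf.prob (binomial_pmf n r) {k. real k \<ge> real n * r}"
    using p eps unfolding r_def by (intro prob_binomial_ge_le_tilted) auto
  also have "\<dots> \<le> exp (- real n * bernoulli_KL r p)"
    by (intro mult_left_le) auto
  also have "\<dots> \<le> exp (- 2 * real n * \<epsilon>\<^sup>2) / 2"
  proof (rule exp_neg_mult_le_half_exp[of y0 \<phi>])
    show "0 < 1 - y0\<^sup>2" using p eps unfolding y0_def r_def by (simp add: abs_square_less_1)
    show "\<phi>\<^sup>2 \<le> y0\<^sup>2"
    proof -
      have "\<phi> \<le> \<bar>y0\<bar>" using off phi eps unfolding y0_def r_def by (auto simp: abs_if split: if_split_asm)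
      then show ?thesis using phi by (metis abs_le_square_iff abs_of_nonneg)
    qed
    show "2 * \<epsilon>\<^sup>2 / (1 - y0\<^sup>2) \<le> bernoulli_KL r p"
      using bernoulli_KL_lower[of \<epsilon> r] p eps unfolding y0_def r_def by simp
  qed (use m balance in auto)
  finally show ?thesis unfolding r_def .
qed

lemma binomial_upper_tail_centre:
  fixes C p \<epsilon> \<theta> m :: real
  assumes BE: "berry_esseen_const C" and p: "0 < p" and eps: "0 < \<epsilon>" "p + \<epsilon> < 1"
    and centre: "\<bar>2 * (p + \<epsilon>) - 1\<bar> \<le> \<theta>" and \<theta>: "\<theta> < 1"
    and m: "0 < m" "m \<le> real n"
  shows "measure_pmf.prob (binomial_pmf n p) {k. real k \<ge> real n * (p + \<epsilon>)}
     \<le> exp (- 2 * real n * \<epsilon>\<^sup>2) * (1 + 4 * C / sqrt ((1 - \<theta>\<^sup>2) * m)) / 2"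
proof -
  define r where "r = p + \<epsilon>"
  have r: "0 < r" "r < 1" "p < r" using p eps unfolding r_def by auto
  have n: "n > 0" using m by simp
  have "\<bar>2 * r - 1 - 4 * \<epsilon> / 3\<bar> < 1" using p eps unfolding r_def by auto
  then have "0 < 1 - (2 * r - 1 - 4 * \<epsilon> / 3)\<^sup>2" "1 - (2 * r - 1 - 4 * \<epsilon> / 3)\<^sup>2 \<le> 1"
    by (simp_all add: abs_square_less_1)
  then have "2 * \<epsilon>\<^sup>2 \<le> 2 * \<epsilon>\<^sup>2 / (1 - (2 * r - 1 - 4 * \<epsilon> / 3)\<^sup>2)"
    by (simp add: le_divide_eq mult_left_le)
  also have "\<dots> \<le> bernoulli_KL r p"
    using bernoulli_KL_lower[of \<epsilon> r] p eps unfolding r_def by simp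
  finally have "real n * (2 * \<epsilon>\<^sup>2) \<le> real n * bernoulli_KL r p" by (intro mult_left_mono) auto
  then have exponent: "exp (- real n * bernoulli_KL r p) \<le> exp (- 2 * real n * \<epsilon>\<^sup>2)"
    by simp
  have "(2 * r - 1)\<^sup>2 \<le> \<theta>\<^sup>2"
    using centre unfolding r_def by (metis abs_le_square_iff abs_of_nonneg abs_ge_zero order_trans)
  then have "(1 - \<theta>\<^sup>2) / 4 \<le> r * (1 - r)" by (simp add: power2_eq_square field_simps)
  moreover have \<theta>_sq: "\<theta>\<^sup>2 < 1" using \<theta> centre by (simp add: abs_square_less_1)
  ultimately have "m * ((1 - \<theta>\<^sup>2) / 4) \<le> real n * (r * (1 - r))"
    using m by (intro mult_mono) auto
  then have "sqrt (m * ((1 - \<theta>\<^sup>2) / 4)) \<le> sqrt (real n * (r * (1 - r)))"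
    by (rule real_sqrt_le_mono)
  then have "sqrt ((1 - \<theta>\<^sup>2) * m) / 2 \<le> sqrt (real n * (r * (1 - r)))"
    by (simp add: real_sqrt_divide mult.commute)
  moreover have "0 < sqrt ((1 - \<theta>\<^sup>2) * m)" using m \<theta>_sq by simp
  ultimately have "C / sqrt (real n * (r * (1 - r))) \<le> C / (sqrt ((1 - \<theta>\<^sup>2) * m) / 2)"
    using berry_esseen_const_nonneg[OF BE] r n by (intro divide_left_mono) auto
  also have "\<dots> = 4 * C / sqrt ((1 - \<theta>\<^sup>2) * m) / 2" by simp
  finally have "C / sqrt (real n * (r * (1 - r))) \<le> 4 * C / sqrt ((1 - \<theta>\<^sup>2) * m) / 2" .
  with binomial_prob_ge_mean_le[OF BE r(1,2) n]
  have mean: "measure_pmf.prob (binomial_pmf n r) {k. real k \<ge> real n * r}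
      \<le> (1 + 4 * C / sqrt ((1 - \<theta>\<^sup>2) * m)) / 2"
    by simp
  have "measure_pmf.prob (binomial_pmf n p) {k. real k \<ge> real n * r}
      \<le> exp (- real n * bernoulli_KL r p) * measure_pmf.prob (binomial_pmf n r) {k. real k \<ge> real n * r}"
    using p r by (intro prob_binomial_ge_le_tilted) auto
  also have "\<dots> \<le> exp (- 2 * real n * \<epsilon>\<^sup>2) * ((1 + 4 * C / sqrt ((1 - \<theta>\<^sup>2) * m)) / 2)"
    using exponent mean by (intro mult_mono) auto
  finally show ?thesis unfolding r_def by simp
qed

lemma binomial_upper_tail_le:
  fixes C p \<epsilon> \<phi> m :: real
  assumes BE: "berry_esseen_const C" and p: "0 < p" "p < 1" and eps: "0 < \<epsilon>"
    and phi: "0 \<le> \<phi>" "4 * \<epsilon> / 3 + \<phi> < 1"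
    and m: "0 < m" "m \<le> real n"
    and balance: "2 * \<epsilon>\<^sup>2 * m * \<phi>\<^sup>2 = ln 2 * (1 - \<phi>\<^sup>2)"
  shows "measure_pmf.prob (binomial_pmf n p) {k. real k \<ge> real n * (p + \<epsilon>)}
     \<le> exp (- 2 * real n * \<epsilon>\<^sup>2) * (1 + 4 * C / sqrt ((1 - (4 * \<epsilon> / 3 + \<phi>)\<^sup>2) * m)) / 2"
    (is "?P \<le> ?a * (1 + ?\<zeta>) / 2")
proof -
  have "(4 * \<epsilon> / 3 + \<phi>)\<^sup>2 < 1" using eps phi by (simp add: abs_square_less_1)
  then have "?\<zeta> \<ge> 0"
    using berry_esseen_const_nonneg[OF BE] m by (intro divide_nonneg_nonneg) auto
  then have half: "?a / 2 \<le> ?a * (1 + ?\<zeta>) / 2" by simp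
  consider "p + \<epsilon> > 1" | "p + \<epsilon> = 1"
    | "p + \<epsilon> < 1" "4 * \<epsilon> / 3 + \<phi> < \<bar>2 * (p + \<epsilon>) - 1\<bar>"
    | "p + \<epsilon> < 1" "\<bar>2 * (p + \<epsilon>) - 1\<bar> \<le> 4 * \<epsilon> / 3 + \<phi>"
    by linarith
  then show ?thesis
  proof cases
    case 1
    have "real k < real n * (p + \<epsilon>)" if "k \<le> n" for k
    proof -
      have "real k \<le> real n" using that by simp
      also have "\<dots> < real n * (p + \<epsilon>)" using 1 m by simp
      finally show ?thesis .
    qed
    then have "{k. real k \<ge> real n * (p + \<epsilon>)} \<inter> {..n} = {}" by force
    then have "?P = 0" using p by (simp add: prob_binomial_pmf_eq_sum)
    with half show ?thesis by simp
  next
    case 2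
    then have "?P \<le> ?a / 2"
      using eps phi m balance by (intro binomial_upper_tail_at_one) auto
    with half show ?thesis by linarith
  next
    case 3
    then have "?P \<le> ?a / 2"
      using p eps phi m balance by (intro binomial_upper_tail_off_centre) auto
    with half show ?thesis by linarith
  next
    case 4
    then show ?thesis using BE p eps phi m by (intro binomial_upper_tail_centre) auto
  qed
qed

lemma prob_binomial_deviation_gt:
  fixes p \<epsilon> b \<delta> :: real
  assumes n: "n > 0" and p: "0 < p" "p < 1"
    and upper: "measure_pmf.prob (binomial_pmf n p) {k. real k \<ge> real n * (p + \<epsilon>)} \<le> b / 2"
    and lower: "measure_pmf.prob (binomial_pmf n (1 - p)) {k. real k \<ge> real n * ((1 - p) + \<epsilon>)} \<le> b / 2"
    and b: "b < \<delta>"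
  shows "measure_pmf.prob (binomial_pmf n p) {k. \<bar>real k / real n - p\<bar> < \<epsilon>} > 1 - \<delta>"
proof -
  let ?B = "binomial_pmf n p" and ?A = "{k. \<bar>real k / real n - p\<bar> < \<epsilon>}"
  have "measure_pmf.prob ?B {k. real k \<le> real n * (p - \<epsilon>)}
      = measure_pmf.prob (binomial_pmf n (1 - p)) {k. real k \<ge> real n * ((1 - p) + \<epsilon>)}"
  proof -
    have "{k. real k \<ge> real n - real n * (p - \<epsilon>)} = {k. real k \<ge> real n * ((1 - p) + \<epsilon>)}"
      by (simp add: algebra_simps)
    then show ?thesis using p by (simp add: prob_binomial_le_eq_ge)
  qed
  with lower have lower': "measure_pmf.prob ?B {k. real k \<le> real n * (p - \<epsilon>)} \<le> b / 2" by simp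
  have "UNIV - ?A \<subseteq> {k. real k \<ge> real n * (p + \<epsilon>)} \<union> {k. real k \<le> real n * (p - \<epsilon>)}"
  proof
    fix k assume "k \<in> UNIV - ?A"
    then have "real k / real n \<ge> p + \<epsilon> \<or> real k / real n \<le> p - \<epsilon>" by auto
    then show "k \<in> {k. real k \<ge> real n * (p + \<epsilon>)} \<union> {k. real k \<le> real n * (p - \<epsilon>)}"
      using n by (auto simp: le_divide_eq divide_le_eq mult.commute)
  qed
  then have "measure_pmf.prob ?B (UNIV - ?A)
      \<le> measure_pmf.prob ?B ({k. real k \<ge> real n * (p + \<epsilon>)} \<union> {k. real k \<le> real n * (p - \<epsilon>)})"
    by (intro measure_pmf.finite_measure_mono) auto
  also have "\<dots> \<le> measure_pmf.prob ?B {k. real k \<ge> real n * (p + \<epsilon>)}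
      + measure_pmf.prob ?B {k. real k \<le> real n * (p - \<epsilon>)}"
    by (rule measure_Un_le) auto
  finally have "measure_pmf.prob ?B (UNIV - ?A) < \<delta>" using upper lower' b by simp
  moreover have "measure_pmf.prob ?B (UNIV - ?A) = 1 - measure_pmf.prob ?B ?A"
    using measure_pmf.prob_compl[of ?A ?B] by simp
  ultimately show ?thesis by simp
qed

lemma delta_bound_imp_lt_one:
  fixes \<epsilon> \<delta> :: real
  assumes eps: "0 < \<epsilon>" "\<epsilon> < 3/4" and delta: "\<delta> < 2 * exp (- (9 * ln 2) / (3 - 4 * \<epsilon>)\<^sup>2)"
  shows "\<delta> < 1"
proof -
  have "(3 - 4 * \<epsilon>)\<^sup>2 < 3\<^sup>2" using eps by (intro power_strict_mono) auto
  then have "ln 2 < 9 * ln 2 / (3 - 4 * \<epsilon>)\<^sup>2" using eps by (simp add: less_divide_eq)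
  then have "exp (- (9 * ln 2) / (3 - 4 * \<epsilon>)\<^sup>2) < exp (- ln 2)" by simp
  then show ?thesis using delta by (simp add: exp_minus)
qed

lemma delta_bound_imp_theta_lt_one:
  fixes \<epsilon> \<delta> :: real
  assumes eps: "\<epsilon> < 3/4" and delta: "0 < \<delta>" "\<delta> < 2 * exp (- (9 * ln 2) / (3 - 4 * \<epsilon>)\<^sup>2)"
  shows "4 * \<epsilon> / 3 + sqrt (ln 2 / ln (2 / \<delta>)) < 1"
proof -
  have "ln \<delta> < ln (2 * exp (- (9 * ln 2) / (3 - 4 * \<epsilon>)\<^sup>2))" using delta by simp
  then have big: "9 * ln 2 / (3 - 4 * \<epsilon>)\<^sup>2 < ln (2 / \<delta>)" using delta by (simp add: ln_mult ln_div)
  moreover have "0 < 9 * ln 2 / (3 - 4 * \<epsilon>)\<^sup>2" using eps by simp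
  ultimately have "0 < ln (2 / \<delta>)" by linarith
  with big have "ln 2 / ln (2 / \<delta>) < (3 - 4 * \<epsilon>)\<^sup>2 / 9"
    using eps by (simp add: divide_less_eq less_divide_eq mult.commute)
  then have "sqrt (ln 2 / ln (2 / \<delta>)) < sqrt (((3 - 4 * \<epsilon>) / 3)\<^sup>2)"
    by (simp add: power_divide)
  then show ?thesis using eps by simp
qed

lemma sqrt_ln_ratio_balance:
  fixes \<epsilon> \<delta> :: real
  assumes "\<epsilon> \<noteq> 0" and delta: "0 < \<delta>" "\<delta> < 1"
  defines "\<phi> \<equiv> sqrt (ln 2 / ln (2 / \<delta>))"
  shows "2 * \<epsilon>\<^sup>2 * (ln (1 / \<delta>) / (2 * \<epsilon>\<^sup>2)) * \<phi>\<^sup>2 = ln 2 * (1 - \<phi>\<^sup>2)"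
proof -
  have L: "ln (1 / \<delta>) > 0" using delta by simp
  have "ln (2 / \<delta>) = ln 2 + ln (1 / \<delta>)" using delta by (simp add: ln_div)
  then have "\<phi>\<^sup>2 = ln 2 / (ln 2 + ln (1 / \<delta>))" unfolding \<phi>_def using L by simp
  moreover have "ln 2 + ln (1 / \<delta>) \<noteq> 0" using L ln_gt_zero[of 2] by linarith
  ultimately show ?thesis using assms(1) by (simp add: field_simps)
qed

lemma exp_hoeffding_lt:
  fixes \<epsilon> \<delta> \<zeta> x :: real
  assumes "0 \<le> \<zeta>" "0 < \<delta>" "\<epsilon> \<noteq> 0" and x: "ln ((1 + \<zeta>) / \<delta>) / (2 * \<epsilon>\<^sup>2) < x"
  shows "exp (- 2 * x * \<epsilon>\<^sup>2) * (1 + \<zeta>) < \<delta>"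
proof -
  have "ln (1 + \<zeta>) - ln \<delta> < 2 * \<epsilon>\<^sup>2 * x"
    using x assms by (simp add: divide_less_eq mult.commute ln_div)
  then have "exp (ln (1 + \<zeta>) - 2 * x * \<epsilon>\<^sup>2) < exp (ln \<delta>)" by (simp add: algebra_simps)
  then show ?thesis using assms by (simp add: exp_diff exp_minus field_simps)
qed

theorem theorem4:
  fixes C\<^sub>B\<^sub>E \<epsilon> \<delta> p :: real and n :: nat
  assumes BE: "berry_esseen_const C\<^sub>B\<^sub>E"
    and eps: "0 < \<epsilon>" "\<epsilon> < 3/4"
    and delta: "0 < \<delta>" "\<delta> < 2 * exp (- (9 * ln 2) / (3 - 4 * \<epsilon>)\<^sup>2)"
    and p: "0 < p" "p < 1"
    and n: "real n > 1 / (2 * \<epsilon>\<^sup>2) *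
              ln ((1 + 4 * C\<^sub>B\<^sub>E / sqrt ((1 - (4 * \<epsilon> / 3 + sqrt (ln 2 / ln (2 / \<delta>)))\<^sup>2)
                                       * (ln (1 / \<delta>) / (2 * \<epsilon>\<^sup>2)))) / \<delta>)"
  shows "measure_pmf.prob (binomial_pmf n p) {k. \<bar>real k / real n - p\<bar> < \<epsilon>} > 1 - \<delta>"
proof -
  define \<phi> where "\<phi> = sqrt (ln 2 / ln (2 / \<delta>))"
  define m where "m = ln (1 / \<delta>) / (2 * \<epsilon>\<^sup>2)"
  define \<zeta> where "\<zeta> = 4 * C\<^sub>B\<^sub>E / sqrt ((1 - (4 * \<epsilon> / 3 + \<phi>)\<^sup>2) * m)"
  have "\<delta> < 1" using delta_bound_imp_lt_one eps delta by blast
  then have m_pos: "0 < m" and balance: "2 * \<epsilon>\<^sup>2 * m * \<phi>\<^sup>2 = ln 2 * (1 - \<phi>\<^sup>2)"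
    using eps delta sqrt_ln_ratio_balance[of \<epsilon> \<delta>] by (simp_all add: m_def \<phi>_def)
  have "0 < ln (2 / \<delta>)" using \<open>\<delta> < 1\<close> delta by simp
  then have phi: "0 \<le> \<phi>" "4 * \<epsilon> / 3 + \<phi> < 1"
    using delta_bound_imp_theta_lt_one[OF eps(2) delta] by (simp_all add: \<phi>_def)
  then have "(4 * \<epsilon> / 3 + \<phi>)\<^sup>2 < 1" using eps by (simp add: abs_square_less_1)
  then have \<zeta>: "0 \<le> \<zeta>"
    unfolding \<zeta>_def using berry_esseen_const_nonneg[OF BE] m_pos by (intro divide_nonneg_nonneg) auto
  have n_gt: "ln ((1 + \<zeta>) / \<delta>) / (2 * \<epsilon>\<^sup>2) < real n"
    using n by (simp add: \<zeta>_def \<phi>_def m_def)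
  have "m \<le> ln ((1 + \<zeta>) / \<delta>) / (2 * \<epsilon>\<^sup>2)"
    unfolding m_def using \<zeta> delta by (intro divide_right_mono) (auto simp: divide_right_mono)
  with n_gt have m_le: "m \<le> real n" by linarith
  have tail: "measure_pmf.prob (binomial_pmf n q) {k. real k \<ge> real n * (q + \<epsilon>)}
      \<le> exp (- 2 * real n * \<epsilon>\<^sup>2) * (1 + \<zeta>) / 2" if "0 < q" "q < 1" for q
    unfolding \<zeta>_def using BE that eps phi m_pos m_le balance by (intro binomial_upper_tail_le)
  have "exp (- 2 * real n * \<epsilon>\<^sup>2) * (1 + \<zeta>) < \<delta>"
    using \<zeta> delta eps n_gt by (intro exp_hoeffding_lt) auto
  moreover have "n > 0" using m_pos m_le by simp
  ultimately show ?thesis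
    using p tail[of p] tail[of "1 - p"] by (intro prob_binomial_deviation_gt) auto
qed
end
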